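(* Let $A$ be a set of $n$ items with costs $c(i)\ge 0$, each satisfying $c(i)\le B$ for a budget $B>0$, and let $v:2^A\to\mathbb{R}_{\ge0}$ be monotone subadditive with $v(\emptyset)=0$, accessible via a demand oracle. The algorithm SA-alg-max below outputs a set $S$ with $c(S)\le B$ and $v(S)\ge \frac18\max\{v(S')\,:\,S'\subseteq A,\ c(S')\le B\}$. SA-alg-max: let $v^*=\max_{i\in A}v(\{i\})$ and $\mathcal V=\{v^*,2v^*,\dots,nv^*\}$. For each $u\in\mathcal V$: set prices $p(i)=\frac{u}{2B}c(i)$, and let $T\in\arg\max_{S\subseteq A}\big(v(S)-\sum_{i\in S}p(i)\big)$ (obtained by a demand query); let $S_u=\emptyset$; if $v(T)<\frac u2$, continue to the next $u$; otherwise, going through the items of $T$ in decreasing order of $c(i)$, put items from $T$ into $S_u$ while preserving the budget constraint $c(S_u)\le B$. Output the set $S_u$ with the largest value $v(S_u)$ over all $u\in\mathcal V$.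
   Context: A demand oracle, given a price vector $p(1),\dots,p(n)$, returns a set $T\in\arg\max_{S\subseteq A}\big(v(S)-\sum_{i\in S}p(i)\big)$ in unit time. Subadditive: $v(S)+v(T)\ge v(S\cup T)$ for all $S,T$. *)

theory Defs
  imports Main "HOL.Real"
begin

definition demand_oracle :: "'a set \<Rightarrow> ('a set \<Rightarrow> real) \<Rightarrow> (('a \<Rightarrow> real) \<Rightarrow> 'a set) \<Rightarrow> bool" where
  "demand_oracle A v D \<longleftrightarrow> (\<forall>p. D p \<subseteq> A \<and>
      (\<forall>S. S \<subseteq> A \<longrightarrow> v S - (\<Sum>i\<in>S. p i) \<le> v (D p) - (\<Sum>i\<in>D p. p i)))"

definition cost_decreasing_order :: "'a set \<Rightarrow> ('a \<Rightarrow> real) \<Rightarrow> ('a set \<Rightarrow> 'a list) \<Rightarrow> bool" where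
  "cost_decreasing_order A c ord \<longleftrightarrow> (\<forall>T. T \<subseteq> A \<longrightarrow>
      distinct (ord T) \<and> set (ord T) = T \<and> sorted_wrt (\<lambda>x y. c x \<ge> c y) (ord T))"

fun greedy_fill :: "('a \<Rightarrow> real) \<Rightarrow> real \<Rightarrow> 'a set \<Rightarrow> 'a list \<Rightarrow> 'a set" where
  "greedy_fill c B S [] = S"
| "greedy_fill c B S (x # xs) =
     greedy_fill c B (if (\<Sum>i\<in>S. c i) + c x \<le> B then insert x S else S) xs"

definition vstar :: "'a set \<Rightarrow> ('a set \<Rightarrow> real) \<Rightarrow> real" where
  "vstar A v = Max ((\<lambda>i. v {i}) ` A)"

definition SA_values :: "'a set \<Rightarrow> ('a set \<Rightarrow> real) \<Rightarrow> real set" where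
  "SA_values A v = (\<lambda>k. real k * vstar A v) ` {1..card A}"

definition SA_set :: "('a \<Rightarrow> real) \<Rightarrow> real \<Rightarrow> ('a set \<Rightarrow> real) \<Rightarrow> (('a \<Rightarrow> real) \<Rightarrow> 'a set)
                       \<Rightarrow> ('a set \<Rightarrow> 'a list) \<Rightarrow> real \<Rightarrow> 'a set" where
  "SA_set c B v D ord u =
     (let p = (\<lambda>i. u / (2 * B) * c i); T = D p
      in if v T < u / 2 then {} else greedy_fill c B {} (ord T))"

end

theory Submission
  imports Defs
begin

text \<open>Let \<open>v\<^sup>*\<close> be the largest singleton value. By subadditivity every feasible \<open>S'\<close> has
  \<open>v(S') \<le> n v\<^sup>*\<close>, so some guess \<open>u = k v\<^sup>*\<close> satisfies \<open>u \<le> v(S') \<le> 2u\<close> (or \<open>u = v\<^sup>*\<close> if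
  \<open>v(S') < v\<^sup>*\<close>, realised by a single item). For such a \<open>u\<close>, comparing the demand set \<open>T\<close> at prices
  \<open>p = u c / 2B\<close> with the feasible witness gives \<open>v(T) - p(T) \<ge> u/2\<close>. Subadditivity and optimality
  of \<open>T\<close> give \<open>v(R) \<ge> p(R)\<close> for every \<open>R \<subseteq> T\<close>. The greedy pass either keeps all of \<open>T\<close>, or,
  since items come in decreasing cost, fills at least half the budget, so \<open>p(R) \<ge> u/4\<close>.
  Either way \<open>v(S\<^sub>u) \<ge> u/4 \<ge> v(S')/8\<close>.\<close>

lemma greedy_fill_subset: "greedy_fill c B S xs \<subseteq> S \<union> set xs"
proof (induction xs arbitrary: S)
  case (Cons x xs)
  let ?S' = "if (\<Sum>i\<in>S. c i) + c x \<le> B then insert x S else S"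
  show ?case using Cons.IH[of ?S'] by auto
qed simp

lemma greedy_fill_superset: "S \<subseteq> greedy_fill c B S xs"
proof (induction xs arbitrary: S)
  case (Cons x xs)
  let ?S' = "if (\<Sum>i\<in>S. c i) + c x \<le> B then insert x S else S"
  show ?case using Cons.IH[of ?S'] by auto
qed simp

lemma greedy_fill_within_budget:
  assumes "finite S" "(\<Sum>i\<in>S. c i) \<le> B"
  shows "(\<Sum>i\<in>greedy_fill c B S xs. c i) \<le> B"
  using assms
proof (induction xs arbitrary: S)
  case (Cons x xs)
  let ?S' = "if (\<Sum>i\<in>S. c i) + c x \<le> B then insert x S else S"
  have "(\<Sum>i\<in>?S'. c i) \<le> B"
    using Cons.prems by (cases "x \<in> S") (auto simp: insert_absorb)
  then show ?case using Cons by simp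
qed simp

text \<open>A rejected item costs at most every item already taken, so a nonempty current set
  already carries half the budget.\<close>

lemma greedy_fill_all_or_half_budget:
  assumes "finite S" "\<forall>i\<in>S \<union> set xs. 0 \<le> c i" "\<forall>i\<in>set xs. c i \<le> B"
    "sorted_wrt (\<lambda>x y. c x \<ge> c y) xs" "\<forall>y\<in>S. \<forall>z\<in>set xs. c z \<le> c y"
  shows "greedy_fill c B S xs = S \<union> set xs \<or> B / 2 \<le> (\<Sum>i\<in>greedy_fill c B S xs. c i)"
  using assms
proof (induction xs arbitrary: S)
  case (Cons x xs)
  show ?case
  proof (cases "(\<Sum>i\<in>S. c i) + c x \<le> B")
    case True
    have "greedy_fill c B (insert x S) xs = insert x S \<union> set xs \<or>
      B / 2 \<le> (\<Sum>i\<in>greedy_fill c B (insert x S) xs. c i)"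
      using Cons.prems by (intro Cons.IH) auto
    then show ?thesis using True by simp
  next
    case False
    then have "S \<noteq> {}" using Cons.prems by auto
    then obtain y where y: "y \<in> S" by blast
    have "c x \<le> c y" using Cons.prems y by auto
    also have "c y \<le> (\<Sum>i\<in>S. c i)"
      using Cons.prems y by (intro member_le_sum) auto
    finally have half: "B / 2 \<le> (\<Sum>i\<in>S. c i)" using False by linarith
    let ?R = "greedy_fill c B S xs"
    have "finite ?R"
      using greedy_fill_subset[of c B S xs] Cons.prems(1) finite_subset by blast
    then have "(\<Sum>i\<in>S. c i) \<le> (\<Sum>i\<in>?R. c i)"
      using greedy_fill_subset[of c B S xs] Cons.prems(2)
      by (intro sum_mono2 greedy_fill_superset) auto
    then show ?thesis using half False by simp
  qed
qed simp

lemma demand_oracle_subset: "demand_oracle A v D \<Longrightarrow> D p \<subseteq> A"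
  unfolding demand_oracle_def by blast

lemma demand_oracle_optimal:
  "demand_oracle A v D \<Longrightarrow> X \<subseteq> A \<Longrightarrow>
     v X - (\<Sum>i\<in>X. p i) \<le> v (D p) - (\<Sum>i\<in>D p. p i)"
  unfolding demand_oracle_def by blast

text \<open>Dropping \<open>R\<close> from the demand set cannot raise the utility, and subadditivity bounds
  the value lost by \<open>v(R)\<close>.\<close>

lemma demand_subset_value_ge_price:
  assumes "finite A" "demand_oracle A v D" "R \<subseteq> D p"
    and subadd: "\<forall>X Y. X \<subseteq> A \<and> Y \<subseteq> A \<longrightarrow> v (X \<union> Y) \<le> v X + v Y"
  shows "(\<Sum>i\<in>R. p i) \<le> v R"
proof -
  let ?T = "D p"
  have TA: "?T \<subseteq> A" using assms(2) by (rule demand_oracle_subset)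
  have "v (?T - R) - (\<Sum>i\<in>?T - R. p i) \<le> v ?T - (\<Sum>i\<in>?T. p i)"
    using TA by (intro demand_oracle_optimal[OF assms(2)]) auto
  moreover have "(\<Sum>i\<in>?T. p i) = (\<Sum>i\<in>R. p i) + (\<Sum>i\<in>?T - R. p i)"
    using assms(3) TA \<open>finite A\<close> by (metis add.commute finite_subset sum.subset_diff)
  moreover have "v ?T \<le> v R + v (?T - R)"
    using subadd TA assms(3) by (metis Diff_partition Diff_subset order_trans)
  ultimately show ?thesis by linarith
qed

lemma SA_set_within_budget:
  assumes "B \<ge> 0"
  shows "(\<Sum>i\<in>SA_set c B v D ord u. c i) \<le> B"
  using greedy_fill_within_budget[of "{}" c B] assms unfolding SA_set_def Let_def by simp

lemma SA_set_value_ge_quarter: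
  assumes "finite A" "B > 0" "\<forall>i\<in>A. 0 \<le> c i \<and> c i \<le> B"
    and subadd: "\<forall>X Y. X \<subseteq> A \<and> Y \<subseteq> A \<longrightarrow> v (X \<union> Y) \<le> v X + v Y"
    and "demand_oracle A v D" "cost_decreasing_order A c ord"
    and "0 \<le> u" "X \<subseteq> A" "(\<Sum>i\<in>X. c i) \<le> B" "u \<le> v X"
  shows "u / 4 \<le> v (SA_set c B v D ord u)"
proof -
  define p where "p = (\<lambda>i. u / (2 * B) * c i)"
  define T where "T = D p"
  have TA: "T \<subseteq> A" unfolding T_def using assms(5) by (rule demand_oracle_subset)
  have price: "(\<Sum>i\<in>Y. p i) = u / (2 * B) * (\<Sum>i\<in>Y. c i)" for Y
    unfolding p_def by (simp add: sum_distrib_left)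
  have "(\<Sum>i\<in>X. p i) \<le> u / (2 * B) * B"
    unfolding price using assms(2,7,9) by (intro mult_left_mono) auto
  then have "u / 2 \<le> v T - (\<Sum>i\<in>T. p i)"
    using demand_oracle_optimal[OF assms(5,8), of p] assms(2,10) unfolding T_def by simp
  moreover have "0 \<le> (\<Sum>i\<in>T. p i)"
    unfolding price using TA assms(2,3,7) by (intro mult_nonneg_nonneg sum_nonneg) auto
  ultimately have vT: "u / 2 \<le> v T" by linarith
  define R where "R = greedy_fill c B {} (ord T)"
  have SA: "SA_set c B v D ord u = R"
    using vT unfolding SA_set_def R_def T_def Let_def p_def by simp
  have ordT: "set (ord T) = T" "sorted_wrt (\<lambda>x y. c x \<ge> c y) (ord T)"
    using assms(6) TA unfolding cost_decreasing_order_def by auto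
  have RT: "R \<subseteq> T" using greedy_fill_subset[of c B "{}" "ord T"] ordT unfolding R_def by auto
  have "R = T \<or> B / 2 \<le> (\<Sum>i\<in>R. c i)"
    using greedy_fill_all_or_half_budget[of "{}" "ord T" c B] ordT TA assms(3)
    unfolding R_def by auto
  then show ?thesis
  proof
    assume "B / 2 \<le> (\<Sum>i\<in>R. c i)"
    then have "u / (2 * B) * (B / 2) \<le> (\<Sum>i\<in>R. p i)"
      unfolding price using assms(2,7) by (intro mult_left_mono) auto
    moreover have "(\<Sum>i\<in>R. p i) \<le> v R"
      using RT assms(1,5) subadd unfolding T_def by (intro demand_subset_value_ge_price)
    ultimately show ?thesis unfolding SA using assms(2) by simp
  qed (use SA vT assms(7) in simp)
qed

lemma vstar_attained:
  "finite A \<Longrightarrow> A \<noteq> {} \<Longrightarrow> \<exists>i\<in>A. v {i} = vstar A v"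
  unfolding vstar_def by (metis (no_types, lifting) Max_in finite_imageI image_iff image_is_empty)

lemma singleton_le_vstar: "finite A \<Longrightarrow> i \<in> A \<Longrightarrow> v {i} \<le> vstar A v"
  unfolding vstar_def by (intro Max_ge) auto

lemma subadditive_le_card_mult_vstar:
  assumes "finite A" "F \<subseteq> A" "v {} = 0"
    and subadd: "\<forall>X Y. X \<subseteq> A \<and> Y \<subseteq> A \<longrightarrow> v (X \<union> Y) \<le> v X + v Y"
  shows "v F \<le> real (card F) * vstar A v"
proof -
  have "finite F" using assms(1,2) finite_subset by blast
  then show ?thesis
    using assms(2)
  proof (induction F rule: finite_induct)
    case (insert x F)
    have "v (insert x F) \<le> v {x} + v F"
      using subadd insert.prems by (metis insert_is_Un insert_subset empty_subsetI)
    moreover have "v {x} \<le> vstar A v"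
      using insert.prems assms(1) by (intro singleton_le_vstar) auto
    ultimately show ?case using insert by (simp add: algebra_simps)
  qed (simp add: assms(3))
qed

text \<open>The multiple \<open>k = \<lfloor>x/a\<rfloor>\<close> satisfies \<open>k a \<le> x < (k+1) a \<le> 2 k a\<close>; below \<open>a\<close> one falls back to \<open>k = 1\<close>.\<close>

lemma exists_multiple_within_factor_two:
  fixes a x :: real
  assumes "0 \<le> a" "1 \<le> n" "x \<le> real n * a"
  shows "\<exists>k\<in>{1..n}. x \<le> 2 * (real k * a) \<and> (real k * a \<le> x \<or> k = 1)"
proof (cases "x < a \<or> a = 0")
  case True
  then show ?thesis using assms by (intro bexI[of _ 1]) auto
next
  case False
  then have pos: "0 < a" using assms(1) by simp
  define k where "k = nat \<lfloor>x / a\<rfloor>"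
  have ge1: "1 \<le> x / a" using False pos by simp
  have "x / a \<le> real n" using assms(3) pos by (simp add: divide_le_eq)
  then have "\<lfloor>x / a\<rfloor> \<le> int n" by (metis floor_mono floor_of_nat)
  then have k: "k \<in> {1..n}" unfolding k_def using ge1 by (auto simp: le_nat_iff)
  have "real k \<le> x / a" "x / a < real k + 1" unfolding k_def using ge1 by linarith+
  then have "real k * a \<le> x" "x < (real k + 1) * a"
    using pos by (simp_all add: le_divide_eq divide_less_eq)
  moreover have "(real k + 1) * a \<le> 2 * (real k * a)" using k pos by simp
  ultimately show ?thesis using k by force
qed

lemma SA_values_guess:
  assumes "finite A" "A \<noteq> {}" "\<forall>i\<in>A. c i \<le> B" "v {} = 0" "\<forall>X. X \<subseteq> A \<longrightarrow> 0 \<le> v X"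
    and subadd: "\<forall>X Y. X \<subseteq> A \<and> Y \<subseteq> A \<longrightarrow> v (X \<union> Y) \<le> v X + v Y"
    and "S' \<subseteq> A" "(\<Sum>i\<in>S'. c i) \<le> B"
  shows "\<exists>u\<in>SA_values A v. 0 \<le> u \<and> v S' \<le> 2 * u \<and>
           (\<exists>X \<subseteq> A. (\<Sum>i\<in>X. c i) \<le> B \<and> u \<le> v X)"
proof -
  obtain i where i: "i \<in> A" "v {i} = vstar A v" using vstar_attained assms(1,2) by blast
  have vs0: "0 \<le> vstar A v" using i assms(5) by force
  have "v S' \<le> real (card S') * vstar A v"
    using assms(1,7,4) subadd by (rule subadditive_le_card_mult_vstar)
  also have "\<dots> \<le> real (card A) * vstar A v"
    using card_mono[OF assms(1,7)] vs0 by (intro mult_right_mono) auto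
  finally obtain k where k: "k \<in> {1..card A}" "v S' \<le> 2 * (real k * vstar A v)"
    "real k * vstar A v \<le> v S' \<or> k = 1"
    using exists_multiple_within_factor_two[OF vs0] assms(1,2) card_gt_0_iff
    by (metis One_nat_def Suc_leI)
  have "\<exists>X \<subseteq> A. (\<Sum>i\<in>X. c i) \<le> B \<and> real k * vstar A v \<le> v X"
    using k(3)
  proof
    assume "k = 1"
    then show ?thesis using i assms(3) by (intro exI[of _ "{i}"]) auto
  qed (use assms(7,8) in blast)
  moreover have "real k * vstar A v \<in> SA_values A v"
    unfolding SA_values_def using k(1) by blast
  ultimately show ?thesis using k(1,2) vs0 by (intro bexI[of _ "real k * vstar A v"]) auto
qed

theorem lemma3p5:
  fixes A :: "'a set" and c :: "'a \<Rightarrow> real" and B :: real and v :: "'a set \<Rightarrow> real"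
    and D :: "('a \<Rightarrow> real) \<Rightarrow> 'a set" and ord :: "'a set \<Rightarrow> 'a list"
    and u0 :: real and S :: "'a set"
  assumes "finite A" and "A \<noteq> {}"
    and "B > 0"
    and "\<forall>i\<in>A. 0 \<le> c i \<and> c i \<le> B"
    and "v {} = 0"
    and "\<forall>X. X \<subseteq> A \<longrightarrow> 0 \<le> v X"
    and "\<forall>X Y. X \<subseteq> Y \<and> Y \<subseteq> A \<longrightarrow> v X \<le> v Y"
    and "\<forall>X Y. X \<subseteq> A \<and> Y \<subseteq> A \<longrightarrow> v (X \<union> Y) \<le> v X + v Y"
    and "demand_oracle A v D"
    and "cost_decreasing_order A c ord"
    and "u0 \<in> SA_values A v"
    and "S = SA_set c B v D ord u0"
    and "\<forall>u\<in>SA_values A v. v (SA_set c B v D ord u) \<le> v S"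
  shows "(\<Sum>i\<in>S. c i) \<le> B \<and>
         (\<forall>S'. S' \<subseteq> A \<and> (\<Sum>i\<in>S'. c i) \<le> B \<longrightarrow> v S' \<le> 8 * v S)"
proof (intro conjI allI impI)
  show "(\<Sum>i\<in>S. c i) \<le> B" unfolding assms(12) using assms(3) by (simp add: SA_set_within_budget)
  fix S' assume S': "S' \<subseteq> A \<and> (\<Sum>i\<in>S'. c i) \<le> B"
  then obtain u X where u: "u \<in> SA_values A v" "0 \<le> u" "v S' \<le> 2 * u"
    and X: "X \<subseteq> A" "(\<Sum>i\<in>X. c i) \<le> B" "u \<le> v X"
    using SA_values_guess[of A c B v S'] assms(1,2,4,5,6,8) by blast
  have "u / 4 \<le> v (SA_set c B v D ord u)"
    using SA_set_value_ge_quarter[OF assms(1,3,4,8,9,10) u(2) X] .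
  also have "\<dots> \<le> v S" using assms(13) u(1) by blast
  finally show "v S' \<le> 8 * v S" using u(3) by linarith
qed

end
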